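(* In the safe linear bandit setting and with the ROFUL quantities described in the context, suppose $\mathcal{X}$ is star-convex with respect to the origin, $\|x\|\le1$ for all $x\in\mathcal{X}$, and $\theta^\top x_*>0$. Then, on the event $\mathcal{E}_{\mathrm{conf}}$, ROFUL is equivalent to an algorithm that, for all $t\in[T]$, chooses $$x_t\in\arg\max_{x\in\bar{\mathcal{Y}}_t^p}\left(\hat\theta_t^\top x+\kappa_t(x)\beta_t\|x\|_{V_t^{-1}}\right);$$ that is, for every $t$, the set of actions ROFUL may play at round $t$ (over all admissible choices of the maximizer $\tilde x_t$) coincides with this argmax set.
   Context: Safe linear bandit setting: at round $t$ the learner plays $x_t$ in a closed set $\mathcal{X}\subseteq\mathbb{R}^d$ and observes $y_t=\theta^\top x_t+\epsilon_t$, $z_t=a^\top x_t+\eta_t$, with $\theta,a$ unknown, $b>0$ known; $\mathcal{Y}=\{x\in\mathcal{X}:a^\top x\le b\}$, $x_*\in\arg\max_{\mathcal{Y}}\theta^\top x$. Constants $S_a\ge\|a\|$, $S_\theta\ge\|\theta\|$, $S=\max(S_a,S_\theta)$, $\nu=b/S_a\le 1$, $\rho>0$, $\delta\in(0,1)$, $\lambda\ge1$. ROFUL: at round $t$, $V_t=\lambda I+\sum_{k<t}x_kx_k^\top$, $\hat a_t=V_t^{-1}\sum_{k<t}x_kz_k$, $\hat\theta_t=V_t^{-1}\sum_{k<t}x_ky_k$, $\beta_t=\rho\sqrt{d\log\left(\frac{1+(t-1)/\lambda}{\delta/2}\right)}+\sqrt\lambda S$, $\|x\|_M=\sqrt{x^\top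 Mx}$; $\mathcal{Y}_t^p=\{x\in\mathcal{X}:\hat a_t^\top x+\beta_t\|x\|_{V_t^{-1}}\le b\}$, $\mathcal{Y}_t^o=\{x\in\mathcal{X}:\hat a_t^\top x-\beta_t\|x\|_{V_t^{-1}}\le b\}$; $\tilde x_t\in\arg\max_{x\in\mathcal{Y}_t^o}(\hat\theta_t^\top x+\beta_t\|x\|_{V_t^{-1}})$; $\tilde b_t=\min(\nu/\|\tilde x_t\|,1)$, $\mu_t=\max\{\mu\in[0,1]:\mu\tilde x_t\in\mathcal{Y}_t^p\}$, $\gamma_t=\max(\tilde b_t,\mu_t)$; play $x_t=\gamma_t\tilde x_t$. $\mathcal{E}_{\mathrm{conf}}$ is the event that $|x^\top(\hat\theta_t-\theta)|\le\beta_t\|x\|_{V_t^{-1}}$ and $|x^\top(\hat a_t-a)|\le\beta_t\|x\|_{V_t^{-1}}$ for all $x\in\mathcal{X}$ and all $t\ge1$. Further notation: $\mathbb{B}$ is the closed Euclidean unit ball; $\hat{\mathcal{Y}}_t^p:=\mathcal{Y}_t^p\cup(\nu\mathbb{B}\cap\mathcal{Y}_t^o)$; $\bar{\mathcal{Y}}_t^p:=\{x\in\hat{\mathcal{Y}}_t^p:\zeta x\notin\hat{\mathcal{Y}}_t^p\ \forall\zeta>1\}$; $\alpha_t(x):=\max\{\mu\ge0:\mu x\in\mathcal{Y}_t^o\}$; and for $x\ne0$, $\kappa_t(x):=(\alpha_t(x)-1)\frac{\hat\theta_t^\top x}{\beta_t\|x\|_{V_t^{-1}}}+\alpha_t(x)$.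 *)

theory Defs
  imports "HOL-Analysis.Analysis"
begin

definition outer :: "real^'n \<Rightarrow> real^'n \<Rightarrow> real^'n^'n" where
  "outer x y = (\<chi> i j. x $ i * y $ j)"

definition Vmat :: "real \<Rightarrow> (nat \<Rightarrow> real^'n) \<Rightarrow> nat \<Rightarrow> real^'n^'n" where
  "Vmat lam xs t = lam *\<^sub>R mat 1 + (\<Sum>k\<in>{1..<t}. outer (xs k) (xs k))"

definition est :: "real \<Rightarrow> (nat \<Rightarrow> real^'n) \<Rightarrow> (nat \<Rightarrow> real) \<Rightarrow> nat \<Rightarrow> real^'n" where
  "est lam xs ws t = matrix_inv (Vmat lam xs t) *v (\<Sum>k\<in>{1..<t}. ws k *\<^sub>R xs k)"

definition conf_radius :: "nat \<Rightarrow> real \<Rightarrow> real \<Rightarrow> real \<Rightarrow> real \<Rightarrow> nat \<Rightarrow> real" where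
  "conf_radius d rho delta lam S t =
     rho * sqrt (real d * ln ((1 + real (t - 1) / lam) / (delta / 2))) + sqrt lam * S"

definition wnorm :: "real^'n^'n \<Rightarrow> real^'n \<Rightarrow> real" where
  "wnorm M x = sqrt (x \<bullet> (M *v x))"

definition argmax_on :: "('a \<Rightarrow> real) \<Rightarrow> 'a set \<Rightarrow> 'a set" where
  "argmax_on f A = {x \<in> A. \<forall>y\<in>A. f y \<le> f x}"

text \<open>Pessimistic and optimistic safe sets (M plays the role of V_t^{-1}).\<close>
definition pess_set :: "(real^'n) set \<Rightarrow> real^'n \<Rightarrow> real \<Rightarrow> real^'n^'n \<Rightarrow> real \<Rightarrow> (real^'n) set" where
  "pess_set X ah be M b = {x \<in> X. ah \<bullet> x + be * wnorm M x \<le> b}"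

definition opt_set :: "(real^'n) set \<Rightarrow> real^'n \<Rightarrow> real \<Rightarrow> real^'n^'n \<Rightarrow> real \<Rightarrow> (real^'n) set" where
  "opt_set X ah be M b = {x \<in> X. ah \<bullet> x - be * wnorm M x \<le> b}"

definition roful_gamma :: "(real^'n) set \<Rightarrow> real^'n \<Rightarrow> real \<Rightarrow> real^'n^'n \<Rightarrow> real \<Rightarrow> real \<Rightarrow> real^'n \<Rightarrow> real" where
  "roful_gamma X ah be M b nu xt =
     max (min (nu / norm xt) 1)
         (GREATEST mu. 0 \<le> mu \<and> mu \<le> 1 \<and> mu *\<^sub>R xt \<in> pess_set X ah be M b)"

definition roful_actions :: "(real^'n) set \<Rightarrow> real^'n \<Rightarrow> real^'n \<Rightarrow> real \<Rightarrow> real^'n^'n \<Rightarrow> real \<Rightarrow> real \<Rightarrow> (real^'n) set" where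
  "roful_actions X thh ah be M b nu =
     {roful_gamma X ah be M b nu xt *\<^sub>R xt | xt.
        xt \<in> argmax_on (\<lambda>x. thh \<bullet> x + be * wnorm M x) (opt_set X ah be M b)}"

definition hat_pess :: "(real^'n) set \<Rightarrow> real^'n \<Rightarrow> real \<Rightarrow> real^'n^'n \<Rightarrow> real \<Rightarrow> real \<Rightarrow> (real^'n) set" where
  "hat_pess X ah be M b nu = pess_set X ah be M b \<union> (cball 0 nu \<inter> opt_set X ah be M b)"

definition bar_pess :: "(real^'n) set \<Rightarrow> real^'n \<Rightarrow> real \<Rightarrow> real^'n^'n \<Rightarrow> real \<Rightarrow> real \<Rightarrow> (real^'n) set" where
  "bar_pess X ah be M b nu =
     {x \<in> hat_pess X ah be M b nu. \<forall>\<zeta>>1. \<zeta> *\<^sub>R x \<notin> hat_pess X ah be M b nu}"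

definition alpha_fn :: "(real^'n) set \<Rightarrow> real^'n \<Rightarrow> real \<Rightarrow> real^'n^'n \<Rightarrow> real \<Rightarrow> real^'n \<Rightarrow> real" where
  "alpha_fn X ah be M b x = (GREATEST mu. 0 \<le> mu \<and> mu *\<^sub>R x \<in> opt_set X ah be M b)"

definition kappa_fn :: "(real^'n) set \<Rightarrow> real^'n \<Rightarrow> real^'n \<Rightarrow> real \<Rightarrow> real^'n^'n \<Rightarrow> real \<Rightarrow> real^'n \<Rightarrow> real" where
  "kappa_fn X thh ah be M b x =
     (alpha_fn X ah be M b x - 1) * (thh \<bullet> x) / (be * wnorm M x) + alpha_fn X ah be M b x"

definition alt_objective :: "(real^'n) set \<Rightarrow> real^'n \<Rightarrow> real^'n \<Rightarrow> real \<Rightarrow> real^'n^'n \<Rightarrow> real \<Rightarrow> real^'n \<Rightarrow> real" where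
  "alt_objective X thh ah be M b x = thh \<bullet> x + kappa_fn X thh ah be M b x * be * wnorm M x"

end

theory Submission
  imports Defs
begin

text \<open>
  Let f(x) = thh.x + beta |x|_M be ROFUL's optimistic index, where M is the inverse Gram
  matrix. It is positively homogeneous, and for x /= 0 the alternative objective equals
  alpha(x) f(x) = f(alpha(x) x), the index of the point where the ray through x leaves
  the optimistic set. On the confidence event x_* is optimistic-safe with
  f(x_*) >= theta.x_* > 0, so every maximizer x~ of f over the optimistic set lies at the
  end of its ray: mu x~ is optimistic-safe iff mu <= 1. Hence the ray meets the extended
  pessimistic set exactly in [0, gamma] x~, its only point on the outer boundary is the
  played action gamma x~, and there the alternative objective equals f(x~) = max f.
  Conversely, at any boundary point z the alternative objective is f(alpha(z) z) <= max f,
  with equality iff alpha(z) z is itself a maximizer, and then z = gamma (alpha(z) z).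
\<close>

lemma outer_self_mult_vector: "outer u u *v y = (u \<bullet> y) *\<^sub>R (u :: real^'n)"
  by (simp add: vec_eq_iff outer_def matrix_vector_mult_def inner_vec_def
      sum_distrib_left mult.commute mult.left_commute)

lemma sum_matrix_vector_mult: "(\<Sum>k\<in>S. A k :: real^'n^'m) *v y = (\<Sum>k\<in>S. A k *v y)"
  by (induction S rule: infinite_finite_induct) (auto simp: matrix_vector_mult_add_rdistrib)

lemma scaleR_matrix_vector_mult: "((c::real) *\<^sub>R (A :: real^'n^'m)) *v y = c *\<^sub>R (A *v y)"
  by (simp add: vec_eq_iff matrix_vector_mult_def sum_distrib_left mult.assoc)

lemma Vmat_quadratic_form:
  fixes y :: "real^'n"
  shows "y \<bullet> (Vmat lam xs t *v y) = lam * (y \<bullet> y) + (\<Sum>k\<in>{1..<t}. (xs k \<bullet> y)\<^sup>2)"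
  by (simp add: Vmat_def matrix_vector_mult_add_rdistrib sum_matrix_vector_mult
      outer_self_mult_vector inner_sum_right scaleR_matrix_vector_mult inner_add_right
      power2_eq_square inner_commute)

lemma Vmat_quadratic_form_ge:
  fixes y :: "real^'n"
  shows "lam * (y \<bullet> y) \<le> y \<bullet> (Vmat lam xs t *v y)"
  unfolding Vmat_quadratic_form by (simp add: sum_nonneg)

lemma invertible_Vmat:
  assumes "lam > 0"
  shows "invertible (Vmat lam xs t :: real^'n^'n)"
proof -
  have "y = 0" if "Vmat lam xs t *v y = 0" for y :: "real^'n"
  proof -
    have "lam * (y \<bullet> y) \<le> 0"
      using Vmat_quadratic_form_ge[of lam y xs t] that by simp
    then have "y \<bullet> y \<le> 0"
      using assms by (simp add: mult_le_0_iff)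
    then show "y = 0"
      by (metis inner_eq_zero_iff inner_ge_zero order_antisym)
  qed
  then show ?thesis
    using matrix_left_invertible_ker invertible_left_inverse by blast
qed

lemma matrix_mul_matrix_inv:
  assumes "invertible (A :: real^'n^'n)"
  shows "A ** matrix_inv A = mat 1"
  using assms unfolding invertible_def matrix_inv_def by (rule someI_ex[THEN conjunct1])

lemma wnorm_matrix_inv_Vmat_pos:
  fixes x :: "real^'n"
  assumes lam: "lam > 0" and "x \<noteq> 0"
  shows "wnorm (matrix_inv (Vmat lam xs t)) x > 0"
proof -
  let ?V = "Vmat lam xs t"
  define y where "y = matrix_inv ?V *v x"
  have x_eq: "x = ?V *v y"
    unfolding y_def
    by (simp add: matrix_vector_mul_assoc matrix_mul_matrix_inv[OF invertible_Vmat[OF lam]])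
  then have "y \<noteq> 0"
    using \<open>x \<noteq> 0\<close> by auto
  have "0 < lam * (y \<bullet> y)"
    using lam \<open>y \<noteq> 0\<close> by simp
  also have "\<dots> \<le> y \<bullet> (?V *v y)"
    by (rule Vmat_quadratic_form_ge)
  also have "\<dots> = x \<bullet> (matrix_inv ?V *v x)"
    using x_eq by (simp add: y_def inner_commute)
  finally show ?thesis
    unfolding wnorm_def by simp
qed

lemma continuous_on_wnorm: "continuous_on S (wnorm M)"
  unfolding wnorm_def by (intro continuous_intros)

lemma wnorm_scaleR: "wnorm M (c *\<^sub>R x) = \<bar>c\<bar> * wnorm M x"
proof -
  have "(c *\<^sub>R x) \<bullet> (M *v (c *\<^sub>R x)) = c\<^sup>2 * (x \<bullet> (M *v x))"
    by (simp add: matrix_vector_mult_scaleR power2_eq_square)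
  then show ?thesis
    unfolding wnorm_def by (simp add: real_sqrt_mult)
qed

lemma conf_radius_pos:
  assumes "rho > 0" "0 < delta" "delta < 1" "lam \<ge> 1" "S > 0"
  shows "conf_radius d rho delta lam S t > 0"
proof -
  define u where "u = 1 + real (t - 1) / lam"
  have "1 \<le> u"
    using assms by (simp add: u_def)
  also have "u \<le> u / (delta / 2)"
    using assms \<open>1 \<le> u\<close> by (simp add: le_divide_eq mult_left_le)
  finally have "0 \<le> ln (u / (delta / 2))"
    by simp
  then show ?thesis
    using assms by (simp add: conf_radius_def u_def add_nonneg_pos)
qed

lemma convex_comb_zero_le:
  fixes b c \<mu> :: real
  assumes "0 \<le> b" "c \<le> b" "0 \<le> \<mu>" "\<mu> \<le> 1"
  shows "\<mu> * c \<le> b"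
  using assms mult_left_mono[of c b \<mu>] mult_left_le_one_le[of b \<mu>] by linarith

text \<open>One round of ROFUL, with M standing for the inverse Gram matrix. The confidence
  event and \<open>\<theta> \<bullet> xstar > 0\<close> enter only through \<open>index_pos\<close>.\<close>
locale roful_round =
  fixes X :: "(real^'d) set" and thh ah :: "real^'d" and be :: real
    and M :: "real^'d^'d" and b nu :: real
  assumes closed_X: "closed X"
    and bounded_X: "bounded X"
    and star_X: "\<forall>x\<in>X. closed_segment 0 x \<subseteq> X"
    and b_pos: "b > 0"
    and be_pos: "be > 0"
    and wnorm_pos: "\<And>x. x \<noteq> 0 \<Longrightarrow> wnorm M x > 0"
    and index_pos: "\<exists>x\<in>opt_set X ah be M b. thh \<bullet> x + be * wnorm M x > 0"
begin

definition index :: "real^'d \<Rightarrow> real" where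
  "index x = thh \<bullet> x + be * wnorm M x"

abbreviation "Yo \<equiv> opt_set X ah be M b"
abbreviation "Yp \<equiv> pess_set X ah be M b"
abbreviation "Yhat \<equiv> hat_pess X ah be M b nu"
abbreviation "Ybar \<equiv> bar_pess X ah be M b nu"
abbreviation "alpha \<equiv> alpha_fn X ah be M b"
abbreviation "objective \<equiv> alt_objective X thh ah be M b"

lemma continuous_on_index: "continuous_on S index"
  unfolding index_def by (intro continuous_intros continuous_on_wnorm)

lemma wnorm_nonneg: "wnorm M x \<ge> 0"
  using wnorm_pos[of x] by (cases "x = 0") (auto simp: wnorm_def)

lemma index_scaleR: "c \<ge> 0 \<Longrightarrow> index (c *\<^sub>R x) = c * index x"
  by (simp add: index_def wnorm_scaleR algebra_simps)

lemma scaleR_mem_X: "x \<in> X \<Longrightarrow> 0 \<le> \<mu> \<Longrightarrow> \<mu> \<le> 1 \<Longrightarrow> \<mu> *\<^sub>R x \<in> X"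
  using star_X by (force simp: closed_segment_def)

lemma scaleR_mem_opt_set_iff:
  "\<mu> \<ge> 0 \<Longrightarrow> \<mu> *\<^sub>R x \<in> Yo \<longleftrightarrow> \<mu> *\<^sub>R x \<in> X \<and> \<mu> * (ah \<bullet> x - be * wnorm M x) \<le> b"
  by (simp add: opt_set_def wnorm_scaleR algebra_simps)

lemma scaleR_mem_pess_set_iff:
  "\<mu> \<ge> 0 \<Longrightarrow> \<mu> *\<^sub>R x \<in> Yp \<longleftrightarrow> \<mu> *\<^sub>R x \<in> X \<and> \<mu> * (ah \<bullet> x + be * wnorm M x) \<le> b"
  by (simp add: pess_set_def wnorm_scaleR algebra_simps)

lemma opt_set_scaleR: "x \<in> Yo \<Longrightarrow> 0 \<le> \<mu> \<Longrightarrow> \<mu> \<le> 1 \<Longrightarrow> \<mu> *\<^sub>R x \<in> Yo"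
  using scaleR_mem_opt_set_iff[of \<mu> x] scaleR_mem_X[of x \<mu>] b_pos
    convex_comb_zero_le[of b "ah \<bullet> x - be * wnorm M x" \<mu>]
  by (auto simp: opt_set_def)

lemma pess_subset_opt: "Yp \<subseteq> Yo"
  unfolding pess_set_def opt_set_def
  using wnorm_nonneg be_pos by (auto intro: order_trans[rotated] simp: add_increasing2)

lemma hat_pess_subset_opt: "Yhat \<subseteq> Yo"
  unfolding hat_pess_def using pess_subset_opt by auto

lemma bar_pess_subset_hat: "Ybar \<subseteq> Yhat"
  unfolding bar_pess_def by auto

lemma bar_pess_nonzero: "x \<in> Ybar \<Longrightarrow> x \<noteq> 0"
  unfolding bar_pess_def by (auto dest: spec[of _ 2])

lemma compact_opt_set: "compact Yo"
proof -
  have "Yo = X \<inter> {x. ah \<bullet> x - be * wnorm M x \<le> b}"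
    by (auto simp: opt_set_def)
  moreover have "closed {x. ah \<bullet> x - be * wnorm M x \<le> b}"
    by (intro closed_Collect_le continuous_intros continuous_on_wnorm)
  ultimately show ?thesis
    using closed_X bounded_X by (simp add: compact_eq_bounded_closed closed_Int bounded_Int)
qed

lemma alpha_fn_attained:
  assumes "x \<in> Yo" "x \<noteq> 0"
  shows "1 \<le> alpha x" "alpha x *\<^sub>R x \<in> Yo"
proof -
  define S where "S = {\<mu>::real. 0 \<le> \<mu> \<and> \<mu> *\<^sub>R x \<in> Yo}"
  have "S = {0..} \<inter> (\<lambda>\<mu>. \<mu> *\<^sub>R x) -` Yo"
    by (auto simp: S_def)
  moreover have "closed ((\<lambda>\<mu>::real. \<mu> *\<^sub>R x) -` Yo)"
    using compact_opt_set by (intro continuous_closed_vimage compact_imp_closed continuous_intros)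
  ultimately have "closed S"
    by auto
  obtain B where B: "\<forall>y\<in>X. norm y \<le> B"
    using bounded_X bounded_iff by blast
  have "bdd_above S"
  proof (rule bdd_aboveI)
    fix \<mu> assume "\<mu> \<in> S"
    then have "\<mu> * norm x \<le> B"
      using B by (auto simp: S_def opt_set_def)
    then show "\<mu> \<le> B / norm x"
      using assms(2) by (simp add: field_simps)
  qed
  have "1 \<in> S"
    using assms by (simp add: S_def)
  have "Sup S \<in> S"
    using \<open>closed S\<close> \<open>bdd_above S\<close> \<open>1 \<in> S\<close> closed_contains_Sup by blast
  have "alpha x = Sup S"
    unfolding alpha_fn_def
  proof (rule Greatest_equality)
    show "0 \<le> Sup S \<and> Sup S *\<^sub>R x \<in> Yo"
      using \<open>Sup S \<in> S\<close> by (simp add: S_def)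
    show "y \<le> Sup S" if "0 \<le> y \<and> y *\<^sub>R x \<in> Yo" for y
      using that \<open>bdd_above S\<close> by (intro cSup_upper) (auto simp: S_def)
  qed
  then show "1 \<le> alpha x" "alpha x *\<^sub>R x \<in> Yo"
    using \<open>Sup S \<in> S\<close> cSup_upper[OF \<open>1 \<in> S\<close> \<open>bdd_above S\<close>] by (simp_all add: S_def)
qed

lemma objective_eq: "x \<noteq> 0 \<Longrightarrow> objective x = alpha x * index x"
  using wnorm_pos[of x] be_pos
  by (simp add: alt_objective_def kappa_fn_def index_def field_simps)

lemma objective_eq_index_scaleR: "x \<noteq> 0 \<Longrightarrow> 1 \<le> alpha x \<Longrightarrow> objective x = index (alpha x *\<^sub>R x)"
  by (simp add: objective_eq index_scaleR)

context
  fixes xt assumes xt_mem: "xt \<in> Yo" and xt_max: "\<forall>y\<in>Yo. index y \<le> index xt"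
begin

lemma index_maximizer_pos: "index xt > 0"
  using index_pos xt_max by (force simp: index_def)

lemma maximizer_nonzero: "xt \<noteq> 0"
  using index_maximizer_pos by (auto simp: index_def wnorm_def)

lemma scaleR_maximizer_mem_opt_iff: "\<mu> \<ge> 0 \<Longrightarrow> \<mu> *\<^sub>R xt \<in> Yo \<longleftrightarrow> \<mu> \<le> 1"
proof
  assume "\<mu> \<ge> 0" "\<mu> *\<^sub>R xt \<in> Yo"
  then have "\<mu> * index xt \<le> index xt"
    using xt_max index_scaleR by metis
  then show "\<mu> \<le> 1"
    using index_maximizer_pos by (simp add: mult_le_cancel_right1)
qed (use opt_set_scaleR xt_mem in blast)

text \<open>The closed form of ROFUL's \<open>\<mu>_t\<close>; it is exact because the whole segment
  \<open>[0, 1] xt\<close> lies in X.\<close>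
definition pess_scale :: real where
  "pess_scale =
     (let c = ah \<bullet> xt + be * wnorm M xt in if c \<le> b then 1 else b / c)"

definition gamma :: real where
  "gamma = max (min (nu / norm xt) 1) pess_scale"

lemma pess_scale_bounds: "0 < pess_scale" "pess_scale \<le> 1"
  using b_pos by (auto simp: pess_scale_def Let_def field_simps)

lemma gamma_pos: "gamma > 0"
  using pess_scale_bounds by (simp add: gamma_def)

lemma scaleR_maximizer_mem_pess_iff:
  assumes "0 \<le> \<mu>" "\<mu> \<le> 1"
  shows "\<mu> *\<^sub>R xt \<in> Yp \<longleftrightarrow> \<mu> \<le> pess_scale"
proof -
  define c where "c = ah \<bullet> xt + be * wnorm M xt"
  have "xt \<in> X"
    using xt_mem by (simp add: opt_set_def)
  then have "\<mu> *\<^sub>R xt \<in> Yp \<longleftrightarrow> \<mu> * c \<le> b"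
    using scaleR_mem_pess_set_iff[of \<mu> xt] scaleR_mem_X assms by (simp add: c_def)
  also have "\<dots> \<longleftrightarrow> \<mu> \<le> pess_scale"
    using convex_comb_zero_le[of b c \<mu>] assms b_pos
    by (cases "c \<le> b") (simp_all add: pess_scale_def c_def[symmetric] pos_le_divide_eq)
  finally show ?thesis .
qed

lemma roful_gamma_eq: "roful_gamma X ah be M b nu xt = gamma"
proof -
  have "(GREATEST \<mu>. 0 \<le> \<mu> \<and> \<mu> \<le> 1 \<and> \<mu> *\<^sub>R xt \<in> Yp) = pess_scale"
    using pess_scale_bounds scaleR_maximizer_mem_pess_iff
    by (intro Greatest_equality) auto
  then show ?thesis
    by (simp add: roful_gamma_def gamma_def)
qed

lemma scaleR_maximizer_mem_hat_iff:
  assumes "\<mu> \<ge> 0"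
  shows "\<mu> *\<^sub>R xt \<in> Yhat \<longleftrightarrow> \<mu> \<le> gamma"
proof -
  have in_ball: "\<mu> *\<^sub>R xt \<in> cball 0 nu \<longleftrightarrow> \<mu> \<le> nu / norm xt"
    using assms maximizer_nonzero by (simp add: pos_le_divide_eq)
  have "\<mu> *\<^sub>R xt \<in> Yhat \<longleftrightarrow> \<mu> \<le> 1 \<and> (\<mu> \<le> pess_scale \<or> \<mu> \<le> nu / norm xt)"
    using assms pess_subset_opt scaleR_maximizer_mem_opt_iff[OF assms]
      scaleR_maximizer_mem_pess_iff[OF assms] in_ball pess_scale_bounds
    unfolding hat_pess_def by auto
  also have "\<dots> \<longleftrightarrow> \<mu> \<le> gamma"
    using pess_scale_bounds by (auto simp: gamma_def)
  finally show ?thesis .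
qed

lemma scaleR_maximizer_mem_bar_iff:
  assumes "s > 0"
  shows "s *\<^sub>R xt \<in> Ybar \<longleftrightarrow> s = gamma"
proof
  assume s: "s *\<^sub>R xt \<in> Ybar"
  then have "s \<le> gamma"
    using assms scaleR_maximizer_mem_hat_iff bar_pess_subset_hat by force
  moreover have "\<not> s < gamma"
  proof
    assume "s < gamma"
    then have "gamma / s > 1" "(gamma / s) *\<^sub>R (s *\<^sub>R xt) \<in> Yhat"
      using assms gamma_pos scaleR_maximizer_mem_hat_iff[of gamma] by simp_all
    then show False
      using s unfolding bar_pess_def by blast
  qed
  ultimately show "s = gamma"
    by simp
next
  assume "s = gamma"
  then show "s *\<^sub>R xt \<in> Ybar"
    unfolding bar_pess_def
    using scaleR_maximizer_mem_hat_iff gamma_pos by (auto simp: mult_le_cancel_right1)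
qed

lemma alpha_gamma_maximizer: "alpha (gamma *\<^sub>R xt) = 1 / gamma"
  unfolding alpha_fn_def
proof (rule Greatest_equality)
  show "0 \<le> 1 / gamma \<and> (1 / gamma) *\<^sub>R gamma *\<^sub>R xt \<in> Yo"
    using gamma_pos xt_mem by simp
next
  fix y assume "0 \<le> y \<and> y *\<^sub>R gamma *\<^sub>R xt \<in> Yo"
  then show "y \<le> 1 / gamma"
    using scaleR_maximizer_mem_opt_iff[of "y * gamma"] gamma_pos by (simp add: pos_le_divide_eq)
qed

lemma objective_gamma_maximizer: "objective (gamma *\<^sub>R xt) = index xt"
  using objective_eq[of "gamma *\<^sub>R xt"] maximizer_nonzero gamma_pos alpha_gamma_maximizer
    index_scaleR[of gamma xt]
  by simp

end

lemma objective_le_index_max: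
  assumes "\<forall>y\<in>Yo. index y \<le> index xt" "z \<in> Ybar"
  shows "objective z \<le> index xt"
proof -
  have "z \<in> Yo" "z \<noteq> 0"
    using assms(2) hat_pess_subset_opt bar_pess_subset_hat bar_pess_nonzero by auto
  then show ?thesis
    using assms(1) alpha_fn_attained objective_eq_index_scaleR by simp
qed

lemma played_action_mem_argmax:
  assumes "xt \<in> argmax_on index Yo"
  shows "gamma xt *\<^sub>R xt \<in> argmax_on objective Ybar"
proof -
  have xt: "xt \<in> Yo" "\<forall>y\<in>Yo. index y \<le> index xt"
    using assms by (auto simp: argmax_on_def)
  have "gamma xt *\<^sub>R xt \<in> Ybar"
    using scaleR_maximizer_mem_bar_iff[OF xt gamma_pos[OF xt]] by simp
  moreover have "objective z \<le> objective (gamma xt *\<^sub>R xt)" if "z \<in> Ybar" for z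
    using objective_le_index_max[OF xt(2) that] objective_gamma_maximizer[OF xt] by simp
  ultimately show ?thesis
    by (simp add: argmax_on_def)
qed

lemma argmax_eq_played_action:
  assumes "z \<in> argmax_on objective Ybar"
  obtains xt where "xt \<in> argmax_on index Yo" "z = gamma xt *\<^sub>R xt"
proof -
  have z: "z \<in> Ybar" "\<forall>y\<in>Ybar. objective y \<le> objective z"
    using assms by (auto simp: argmax_on_def)
  have "z \<in> Yo" "z \<noteq> 0"
    using z(1) hat_pess_subset_opt bar_pess_subset_hat bar_pess_nonzero by auto
  then have alpha_z: "1 \<le> alpha z" "alpha z *\<^sub>R z \<in> Yo"
    using alpha_fn_attained by auto
  define xt where "xt = alpha z *\<^sub>R z"
  have index_xt: "index xt = objective z"
    using objective_eq_index_scaleR[OF \<open>z \<noteq> 0\<close> alpha_z(1)] by (simp add: xt_def)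
  obtain x0 where x0: "x0 \<in> argmax_on index Yo"
    using continuous_attains_sup[OF compact_opt_set _ continuous_on_index] index_pos
    by (auto simp: argmax_on_def)
  have "index x0 = objective (gamma x0 *\<^sub>R x0)"
    using x0 objective_gamma_maximizer by (simp add: argmax_on_def)
  also have "\<dots> \<le> objective z"
    using played_action_mem_argmax[OF x0] z(2) by (simp add: argmax_on_def)
  finally have "index x0 \<le> objective z" .
  then have xt_max: "xt \<in> argmax_on index Yo"
    using x0 alpha_z(2) index_xt by (auto simp: argmax_on_def xt_def)
  then have xt: "xt \<in> Yo" "\<forall>y\<in>Yo. index y \<le> index xt"
    by (auto simp: argmax_on_def)
  have z_eq: "z = (1 / alpha z) *\<^sub>R xt"
    using alpha_z(1) by (simp add: xt_def)
  then have "1 / alpha z = gamma xt"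
    using scaleR_maximizer_mem_bar_iff[OF xt, of "1 / alpha z"] alpha_z(1) z(1) by simp
  then show ?thesis
    using that xt_max z_eq by simp
qed

lemma roful_actions_eq_argmax: "roful_actions X thh ah be M b nu = argmax_on objective Ybar"
proof -
  have "roful_actions X thh ah be M b nu =
      (\<lambda>xt. roful_gamma X ah be M b nu xt *\<^sub>R xt) ` argmax_on index Yo"
    by (auto simp: roful_actions_def index_def[abs_def])
  also have "\<dots> = (\<lambda>xt. gamma xt *\<^sub>R xt) ` argmax_on index Yo"
    by (rule image_cong) (auto simp: argmax_on_def roful_gamma_eq)
  also have "\<dots> = argmax_on objective Ybar"
    by (blast elim: argmax_eq_played_action intro: played_action_mem_argmax)
  finally show ?thesis .
qed

end

theorem proposition1:
  fixes X :: "(real^'d) set" and \<theta> a xstar :: "real^'d"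
    and b Sa Sth rho delta lam :: real
    and xs :: "nat \<Rightarrow> real^'d" and ys zs :: "nat \<Rightarrow> real"
  defines "nu \<equiv> b / Sa"
    and "Minv \<equiv> (\<lambda>t. matrix_inv (Vmat lam xs t))"
    and "thh \<equiv> est lam xs ys"
    and "ah \<equiv> est lam xs zs"
    and "be \<equiv> conf_radius CARD('d) rho delta lam (max Sa Sth)"
  assumes X_closed: "closed X"
    and X_norm: "\<forall>x\<in>X. norm x \<le> 1"
    and X_star: "\<forall>x\<in>X. closed_segment 0 x \<subseteq> X"
    and b_pos: "b > 0"
    and Sa: "Sa > 0" "norm a \<le> Sa"
    and Sth: "norm \<theta> \<le> Sth"
    and nu_le: "nu \<le> 1"
    and rho: "rho > 0"
    and delta: "0 < delta" "delta < 1"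
    and lam: "lam \<ge> 1"
    and xstar_safe: "xstar \<in> X" "a \<bullet> xstar \<le> b"
    and xstar_opt: "\<forall>x\<in>X. a \<bullet> x \<le> b \<longrightarrow> \<theta> \<bullet> x \<le> \<theta> \<bullet> xstar"
    and xstar_pos: "\<theta> \<bullet> xstar > 0"
    and E_conf: "\<forall>t\<ge>1. \<forall>x\<in>X.
        \<bar>x \<bullet> (thh t - \<theta>)\<bar> \<le> be t * wnorm (Minv t) x \<and>
        \<bar>x \<bullet> (ah t - a)\<bar> \<le> be t * wnorm (Minv t) x"
  shows "\<forall>t\<ge>1.
     roful_actions X (thh t) (ah t) (be t) (Minv t) b nu =
     argmax_on (alt_objective X (thh t) (ah t) (be t) (Minv t) b)
               (bar_pess X (ah t) (be t) (Minv t) b nu)"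
proof (intro allI impI)
  fix t :: nat assume "t \<ge> 1"
  have conf: "\<bar>xstar \<bullet> (thh t - \<theta>)\<bar> \<le> be t * wnorm (Minv t) xstar"
      "\<bar>xstar \<bullet> (ah t - a)\<bar> \<le> be t * wnorm (Minv t) xstar"
    using E_conf \<open>t \<ge> 1\<close> xstar_safe by auto
  have "xstar \<in> opt_set X (ah t) (be t) (Minv t) b"
    using conf xstar_safe by (auto simp: opt_set_def inner_diff_right inner_commute)
  moreover have "thh t \<bullet> xstar + be t * wnorm (Minv t) xstar > 0"
    using conf xstar_pos by (auto simp: inner_diff_right inner_commute)
  moreover have "bounded X"
    using X_norm by (auto simp: bounded_iff)
  moreover have "be t > 0"
    using rho delta lam Sa by (simp add: be_def conf_radius_pos)
  moreover have "x \<noteq> 0 \<Longrightarrow> wnorm (Minv t) x > 0" for x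
    using lam by (simp add: Minv_def wnorm_matrix_inv_Vmat_pos)
  ultimately interpret roful_round X "thh t" "ah t" "be t" "Minv t" b nu
    using X_closed X_star b_pos by unfold_locales blast+
  show "roful_actions X (thh t) (ah t) (be t) (Minv t) b nu =
      argmax_on (alt_objective X (thh t) (ah t) (be t) (Minv t) b)
        (bar_pess X (ah t) (be t) (Minv t) b nu)"
    by (rule roful_actions_eq_argmax)
qed

end
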